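(* For all $A,r\in\mathbb{N}$ and $\varepsilon>0$ there exists $N\in\mathbb{N}$ such that the following holds. Let $n_1,\ldots,n_r$ be positive integers with $n_i\leq An_j$ for all $i,j$ and $n=n_1+\cdots+n_r\geq N$; let $\Lambda=(\lambda_{i,j})$ be a symmetric non-negative $r\times r$ matrix that is $\varepsilon$-separated; let $p_{i,j}=\lambda_{i,j}/\sqrt{n_in_j}$, $M_{i,j}=p_{i,j}n_j$, and suppose $\rho(M)\geq 1+\varepsilon$. Let $Q=((n_j-n^{0.999})p_{i,j})_{i,j\in[r]}$. Then $\rho(Q)\geq 1+\varepsilon/2$; in particular, for every non-zero initial configuration $x$, the Galton–Watson process $\mathrm{GW}(\vec n-n^{0.999}\vec 1,P,x)$ is super-critical.
   Context: $\rho(\cdot)$ denotes the largest eigenvalue. $\Lambda$ is $\varepsilon$-separated if for all $i,j$ either $\lambda_{i,j}=0$ or $\varepsilon\leq\lambda_{i,j}\leq 1/\varepsilon$. $\mathrm{GW}(\vec m,P,x)$ is the multi-type Galton–Watson process in which each individual of type $i$ has, independently for each $j$, a $\mathrm{Binomial}(m_j,p_{i,j})$ number of children of type $j$; its mean offspring matrix is $(m_jp_{i,j})_{i,j}$, and it is called super-critical when the largest eigenvalue of this matrix exceeds $1$. *)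

theory Defs
  imports Complex_Main "Jordan_Normal_Form.Char_Poly"
begin

definition largest_eigenvalue :: "real mat \<Rightarrow> real" where
  "largest_eigenvalue A = Max {k. eigenvalue A k}"

definition eps_separated :: "nat \<Rightarrow> real \<Rightarrow> (nat \<Rightarrow> nat \<Rightarrow> real) \<Rightarrow> bool" where
  "eps_separated r \<epsilon> \<Lambda> \<longleftrightarrow>
     (\<forall>i<r. \<forall>j<r. \<Lambda> i j = 0 \<or> (\<epsilon> \<le> \<Lambda> i j \<and> \<Lambda> i j \<le> 1 / \<epsilon>))"

end

theory Submission
  imports Defs "Jordan_Normal_Form.Spectral_Radius" "HOL-Analysis.Function_Topology"
begin

(*
  With P = (p i j) symmetric and D = diag d for positive weights d, the matrix P D is similar
  to the symmetric matrix D^(1/2) P D^(1/2). Hence it has a largest real eigenvalue, which is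
  the maximum of the Rayleigh quotient u\<^sup>T P u / (\<Sum>i. u i\<^sup>2 / d i). Evaluating this quotient
  for the weights c = n - n powr 0.999 at u = D v, where v is a top eigenvector of M = P D,
  shows \<rho>(Q) \<ge> \<theta> \<rho>(M) as soon as c \<ge> \<theta> n componentwise. Since every n j is at least
  n / (r A) and n powr 0.999 = o(n), this holds with \<theta> = (1 + \<epsilon>/2) / (1 + \<epsilon>) for large n.
*)

definition quad_form :: "nat \<Rightarrow> (nat \<Rightarrow> nat \<Rightarrow> real) \<Rightarrow> (nat \<Rightarrow> real) \<Rightarrow> real" where
  "quad_form r S z = (\<Sum>i<r. \<Sum>j<r. S i j * z i * z j)"

definition col_scaled_mat :: "nat \<Rightarrow> (nat \<Rightarrow> nat \<Rightarrow> real) \<Rightarrow> (nat \<Rightarrow> real) \<Rightarrow> real mat" where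
  "col_scaled_mat r p c = mat r r (\<lambda>(i, j). p i j * c j)"

lemma nonneg_eq_0_if_quadratic_nonpos:
  fixes a b :: real
  assumes "b \<ge> 0" and "\<And>t. 2 * t * b + t\<^sup>2 * a \<le> 0"
  shows "b = 0"
proof (rule ccontr)
  assume "b \<noteq> 0"
  with assms(1) have "b > 0" by simp
  define t where "t = b / (\<bar>a\<bar> + 1)"
  have "t > 0" using \<open>b > 0\<close> by (simp add: t_def add_pos_nonneg)
  have "t * \<bar>a\<bar> \<le> b" using \<open>b > 0\<close> by (simp add: t_def field_simps)
  with \<open>t > 0\<close> have "t * (t * \<bar>a\<bar>) \<le> t * b" by (simp add: mult_left_mono)
  moreover have "- (t * (t * \<bar>a\<bar>)) \<le> t\<^sup>2 * a" by (simp add: power2_eq_square abs_if)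
  ultimately have "t * b \<le> 2 * t * b + t\<^sup>2 * a" by linarith
  moreover have "t * b > 0" using \<open>t > 0\<close> \<open>b > 0\<close> by simp
  ultimately show False using assms(2)[of t] by linarith
qed

lemma compact_unit_sphere_fun:
  "compact {z :: nat \<Rightarrow> real. (\<forall>i\<ge>r. z i = 0) \<and> (\<Sum>i<r. (z i)\<^sup>2) = 1}"
proof -
  let ?B = "\<lambda>i::nat. if i < r then {-1..1::real} else {0}"
  have "compactin (product_topology (\<lambda>_. euclidean) UNIV) (PiE UNIV ?B)"
    by (subst compactin_PiE) auto
  then have "compact (PiE UNIV ?B)"
    by (simp add: euclidean_product_topology)
  moreover have "closed {z :: nat \<Rightarrow> real. (\<Sum>i<r. (z i)\<^sup>2) = 1}"
    by (intro closed_Collect_eq continuous_intros) auto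
  moreover have "(z i)\<^sup>2 \<le> 1" if "(\<Sum>i<r. (z i)\<^sup>2) = 1" "i < r" for z :: "nat \<Rightarrow> real" and i
    using member_le_sum[of i "{..<r}" "\<lambda>i. (z i)\<^sup>2"] that by simp
  then have "{z :: nat \<Rightarrow> real. (\<forall>i\<ge>r. z i = 0) \<and> (\<Sum>i<r. (z i)\<^sup>2) = 1}
      = PiE UNIV ?B \<inter> {z. (\<Sum>i<r. (z i)\<^sup>2) = 1}"
    by (auto simp: PiE_UNIV_domain Pi_iff abs_square_le_1 abs_le_iff not_less split: if_splits)
  ultimately show ?thesis
    by (simp add: compact_Int_closed)
qed

lemma quad_form_cong:
  "(\<And>i. i < r \<Longrightarrow> z i = z' i) \<Longrightarrow> quad_form r S z = quad_form r S z'"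
  unfolding quad_form_def by simp

lemma quad_form_scale: "quad_form r S (\<lambda>i. s * z i) = s\<^sup>2 * quad_form r S z"
  unfolding quad_form_def by (simp add: sum_distrib_left power2_eq_square mult_ac)

lemma quad_form_le_max_on_sphere:
  assumes "r > 0"
  obtains x where "(\<Sum>i<r. (x i)\<^sup>2) = 1"
    and "\<And>z. quad_form r S z \<le> quad_form r S x * (\<Sum>i<r. (z i)\<^sup>2)"
proof -
  define T where "T = {z :: nat \<Rightarrow> real. (\<forall>i\<ge>r. z i = 0) \<and> (\<Sum>i<r. (z i)\<^sup>2) = 1}"
  have "(\<lambda>i. if i = 0 then 1 else 0) \<in> T"
    using assms by (simp add: T_def if_distrib[of "\<lambda>x. x\<^sup>2"] cong: if_cong)
  moreover have "continuous_on T (quad_form r S)"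
    unfolding quad_form_def
    by (intro continuous_intros continuous_on_subset[OF continuous_on_product_coordinates]) auto
  ultimately obtain x where "x \<in> T" and x_max: "\<And>y. y \<in> T \<Longrightarrow> quad_form r S y \<le> quad_form r S x"
    using continuous_attains_sup[OF compact_unit_sphere_fun[of r, folded T_def]] by blast
  have "quad_form r S z \<le> quad_form r S x * (\<Sum>i<r. (z i)\<^sup>2)" for z
  proof (cases "(\<Sum>i<r. (z i)\<^sup>2) = 0")
    case True
    then have "quad_form r S z = quad_form r S (\<lambda>_. 0)"
      by (intro quad_form_cong) (simp add: sum_nonneg_eq_0_iff)
    with True show ?thesis by (simp add: quad_form_def)
  next
    case False
    define q where "q = (\<Sum>i<r. (z i)\<^sup>2)"
    have "q > 0" using False by (simp add: q_def order_le_neq_trans[OF sum_nonneg])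
    define z' where "z' i = (if i < r then z i / sqrt q else 0)" for i
    have "(\<Sum>i<r. (z' i)\<^sup>2) = (\<Sum>i<r. (z i)\<^sup>2 / q)"
      using \<open>q > 0\<close> by (intro sum.cong) (simp_all add: z'_def power_divide)
    also have "\<dots> = 1"
      using \<open>q > 0\<close> by (simp add: q_def sum_divide_distrib[symmetric])
    finally have "z' \<in> T" by (simp add: T_def z'_def)
    have "quad_form r S z' = quad_form r S (\<lambda>i. (1 / sqrt q) * z i)"
      by (intro quad_form_cong) (simp add: z'_def)
    also have "\<dots> = quad_form r S z / q"
      using \<open>q > 0\<close> by (simp only: quad_form_scale) (simp add: power_divide)
    finally have "quad_form r S z / q \<le> quad_form r S x"
      using x_max[OF \<open>z' \<in> T\<close>] by simp
    with \<open>q > 0\<close> show ?thesis by (simp add: q_def divide_le_eq mult.commute)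
  qed
  moreover have "(\<Sum>i<r. (x i)\<^sup>2) = 1" using \<open>x \<in> T\<close> by (simp add: T_def)
  ultimately show ?thesis using that by blast
qed

lemma quad_form_add_scaled:
  assumes "\<And>i j. i < r \<Longrightarrow> j < r \<Longrightarrow> S i j = S j i"
  shows "quad_form r S (\<lambda>i. x i + t * w i)
    = quad_form r S x + 2 * t * (\<Sum>i<r. w i * (\<Sum>j<r. S i j * x j)) + t\<^sup>2 * quad_form r S w"
proof -
  have "S i j * (x i + t * w i) * (x j + t * w j)
      = S i j * x i * x j + t * (S i j * w i * x j) + t * (S i j * x i * w j) + t\<^sup>2 * (S i j * w i * w j)"
    for i j by (simp add: algebra_simps power2_eq_square)
  then have expand: "quad_form r S (\<lambda>i. x i + t * w i) = quad_form r S x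
      + t * (\<Sum>i<r. \<Sum>j<r. S i j * w i * x j) + t * (\<Sum>i<r. \<Sum>j<r. S i j * x i * w j)
      + t\<^sup>2 * quad_form r S w"
    by (simp add: quad_form_def sum.distrib sum_distrib_left)
  have "(\<Sum>i<r. \<Sum>j<r. S i j * x i * w j) = (\<Sum>i<r. \<Sum>j<r. S i j * w i * x j)"
    by (subst sum.swap) (intro sum.cong refl, simp add: assms mult_ac)
  moreover have "(\<Sum>i<r. \<Sum>j<r. S i j * w i * x j) = (\<Sum>i<r. w i * (\<Sum>j<r. S i j * x j))"
    by (simp add: sum_distrib_left mult_ac)
  ultimately show ?thesis
    unfolding expand by simp
qed

lemma eigen_equation_if_quad_form_max:
  assumes sym: "\<And>i j. i < r \<Longrightarrow> j < r \<Longrightarrow> S i j = S j i"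
    and le: "\<And>z. quad_form r S z \<le> k * (\<Sum>i<r. (z i)\<^sup>2)"
    and eq: "quad_form r S x = k * (\<Sum>i<r. (x i)\<^sup>2)"
    and "i < r"
  shows "(\<Sum>j<r. S i j * x j) = k * x i"
proof -
  \<comment> \<open>The bound at \<open>x + t w\<close> for all \<open>t\<close> forces the linear term \<open>2 t |w|\<^sup>2\<close> to vanish.\<close>
  define w where "w i = (\<Sum>j<r. S i j * x j) - k * x i" for i
  have w_Sx: "(\<Sum>i<r. w i * (\<Sum>j<r. S i j * x j)) = (\<Sum>i<r. (w i)\<^sup>2) + k * (\<Sum>i<r. w i * x i)"
    by (simp add: w_def power2_eq_square algebra_simps sum.distrib sum_distrib_left sum_subtractf)
  have "2 * t * (\<Sum>i<r. (w i)\<^sup>2) + t\<^sup>2 * (quad_form r S w - k * (\<Sum>i<r. (w i)\<^sup>2)) \<le> 0" for t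
  proof -
    have "(\<Sum>i<r. (x i + t * w i)\<^sup>2)
        = (\<Sum>i<r. (x i)\<^sup>2) + 2 * t * (\<Sum>i<r. w i * x i) + t\<^sup>2 * (\<Sum>i<r. (w i)\<^sup>2)"
      by (simp add: power2_eq_square algebra_simps sum.distrib sum_distrib_left)
    moreover have "quad_form r S (\<lambda>i. x i + t * w i)
        = k * (\<Sum>i<r. (x i)\<^sup>2) + 2 * t * ((\<Sum>i<r. (w i)\<^sup>2) + k * (\<Sum>i<r. w i * x i))
          + t\<^sup>2 * quad_form r S w"
      by (simp only: quad_form_add_scaled[OF sym] w_Sx eq)
    ultimately show ?thesis
      using le[of "\<lambda>i. x i + t * w i"] by (simp add: algebra_simps)
  qed
  then have "(\<Sum>i<r. (w i)\<^sup>2) = 0"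
    by (intro nonneg_eq_0_if_quadratic_nonpos[OF sum_nonneg]) auto
  with \<open>i < r\<close> have "w i = 0" by (simp add: sum_nonneg_eq_0_iff)
  then show ?thesis by (simp add: w_def)
qed

lemma eigenvalue_col_scaled_mat_iff:
  "eigenvalue (col_scaled_mat r p c) k \<longleftrightarrow>
    (\<exists>v. (\<exists>i<r. v i \<noteq> 0) \<and> (\<forall>i<r. (\<Sum>j<r. p i j * c j * v j) = k * v i))"
proof
  assume "eigenvalue (col_scaled_mat r p c) k"
  then obtain v where v: "v \<in> carrier_vec r" "v \<noteq> 0\<^sub>v r" "col_scaled_mat r p c *\<^sub>v v = k \<cdot>\<^sub>v v"
    by (auto simp: eigenvalue_def eigenvector_def col_scaled_mat_def)
  have "\<exists>i<r. v $ i \<noteq> 0"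
    using v(1,2) by (auto intro: eq_vecI)
  moreover have "(\<Sum>j<r. p i j * c j * v $ j) = k * v $ i" if "i < r" for i
    using arg_cong[OF v(3), of "\<lambda>u. u $ i"] v(1) that
    by (simp add: col_scaled_mat_def scalar_prod_def lessThan_atLeast0)
  ultimately show "\<exists>v. (\<exists>i<r. v i \<noteq> 0) \<and> (\<forall>i<r. (\<Sum>j<r. p i j * c j * v j) = k * v i)"
    by blast
next
  assume "\<exists>v. (\<exists>i<r. v i \<noteq> 0) \<and> (\<forall>i<r. (\<Sum>j<r. p i j * c j * v j) = k * v i)"
  then obtain v i0 where "i0 < r" "v i0 \<noteq> 0" and v: "\<And>i. i < r \<Longrightarrow> (\<Sum>j<r. p i j * c j * v j) = k * v i"
    by blast
  then have "vec r v \<noteq> 0\<^sub>v r"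
    by (metis index_vec index_zero_vec(1))
  moreover have "col_scaled_mat r p c *\<^sub>v vec r v = k \<cdot>\<^sub>v vec r v"
    by (rule eq_vecI) (simp_all add: col_scaled_mat_def scalar_prod_def atLeast0LessThan v)
  ultimately show "eigenvalue (col_scaled_mat r p c) k"
    unfolding eigenvalue_def eigenvector_def
    by (intro exI[of _ "vec r v"]) (simp add: col_scaled_mat_def)
qed

lemma finite_eigenvalues:
  fixes A :: "'a :: field mat"
  shows "A \<in> carrier_mat n n \<Longrightarrow> finite {k. eigenvalue A k}"
  using card_finite_spectrum(1)[of A n] by (simp add: spectrum_def)

lemma eigenvalue_le_largest_eigenvalue:
  "A \<in> carrier_mat n n \<Longrightarrow> eigenvalue A k \<Longrightarrow> k \<le> largest_eigenvalue A"
  unfolding largest_eigenvalue_def by (auto intro: Max_ge finite_eigenvalues)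

lemma eigenvalue_largest_eigenvalue:
  "A \<in> carrier_mat n n \<Longrightarrow> eigenvalue A k \<Longrightarrow> eigenvalue A (largest_eigenvalue A)"
  unfolding largest_eigenvalue_def using Max_in[OF finite_eigenvalues] by blast

lemma col_scaled_mat_carrier [simp]: "col_scaled_mat r p c \<in> carrier_mat r r"
  by (simp add: col_scaled_mat_def)

lemma eigenvalue_col_scaled_mat_if_symmetrized:
  assumes c: "\<And>i. i < r \<Longrightarrow> c i > 0"
    and x: "\<And>i. i < r \<Longrightarrow> (\<Sum>j<r. sqrt (c i) * p i j * sqrt (c j) * x j) = k * x i"
    and "i0 < r" "x i0 \<noteq> 0"
  shows "eigenvalue (col_scaled_mat r p c) k"
  unfolding eigenvalue_col_scaled_mat_iff
proof (intro exI[of _ "\<lambda>j. x j / sqrt (c j)"] conjI allI impI)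
  show "\<exists>i<r. x i / sqrt (c i) \<noteq> 0"
    using \<open>i0 < r\<close> \<open>x i0 \<noteq> 0\<close> c[of i0] by auto
  fix i assume "i < r"
  have "p i j * c j * (x j / sqrt (c j)) = sqrt (c i) * p i j * sqrt (c j) * x j / sqrt (c i)"
    if "j < r" for j
  proof -
    have "p i j * c j * (x j / sqrt (c j)) = p i j * (c j / sqrt (c j)) * x j"
      by simp
    also have "\<dots> = p i j * sqrt (c j) * x j"
      using c[OF that] by (simp add: real_div_sqrt)
    also have "\<dots> = sqrt (c i) * p i j * sqrt (c j) * x j / sqrt (c i)"
      using c[OF \<open>i < r\<close>] by simp
    finally show ?thesis .
  qed
  then have "(\<Sum>j<r. p i j * c j * (x j / sqrt (c j)))
      = (\<Sum>j<r. sqrt (c i) * p i j * sqrt (c j) * x j) / sqrt (c i)"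
    unfolding sum_divide_distrib by simp
  then show "(\<Sum>j<r. p i j * c j * (x j / sqrt (c j))) = k * (x i / sqrt (c i))"
    using x[OF \<open>i < r\<close>] by simp
qed

lemma rayleigh_eigenvalue_col_scaled_mat:
  assumes "r > 0" and sym: "\<And>i j. i < r \<Longrightarrow> j < r \<Longrightarrow> p i j = p j i"
    and c: "\<And>i. i < r \<Longrightarrow> c i > 0"
  obtains k where "eigenvalue (col_scaled_mat r p c) k"
    and "\<And>u. quad_form r p u \<le> k * (\<Sum>i<r. (u i)\<^sup>2 / c i)"
proof -
  define S where "S i j = sqrt (c i) * p i j * sqrt (c j)" for i j
  have S_sym: "S i j = S j i" if "i < r" "j < r" for i j
    using sym[OF that] by (simp add: S_def)
  obtain x where x_norm: "(\<Sum>i<r. (x i)\<^sup>2) = 1"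
    and x_max: "\<And>z. quad_form r S z \<le> quad_form r S x * (\<Sum>i<r. (z i)\<^sup>2)"
    using quad_form_le_max_on_sphere[OF \<open>r > 0\<close>, where S = S] by blast
  define k where "k = quad_form r S x"
  have x_eigen: "(\<Sum>j<r. sqrt (c i) * p i j * sqrt (c j) * x j) = k * x i" if "i < r" for i
    using eigen_equation_if_quad_form_max[OF S_sym x_max[folded k_def] _ that] x_norm
    by (simp add: k_def S_def)
  obtain i0 where "i0 < r" "x i0 \<noteq> 0"
    using x_norm by (metis (no_types, lifting) lessThan_iff power_zero_numeral sum.neutral zero_neq_one)
  have "eigenvalue (col_scaled_mat r p c) k"
    using c x_eigen \<open>i0 < r\<close> \<open>x i0 \<noteq> 0\<close> by (rule eigenvalue_col_scaled_mat_if_symmetrized)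
  moreover have "quad_form r p u \<le> k * (\<Sum>i<r. (u i)\<^sup>2 / c i)" for u
  proof -
    define z where "z i = u i / sqrt (c i)" for i
    have "quad_form r S z = quad_form r p u"
      unfolding quad_form_def S_def z_def
      by (intro sum.cong refl) (simp add: field_simps c[THEN less_imp_neq, THEN not_sym])
    moreover have "(\<Sum>i<r. (z i)\<^sup>2) = (\<Sum>i<r. (u i)\<^sup>2 / c i)"
      using c by (intro sum.cong) (simp_all add: z_def power_divide less_imp_le)
    ultimately show ?thesis
      using x_max[of z] by (simp add: k_def)
  qed
  ultimately show ?thesis using that by blast
qed

lemma quad_form_scaled_eigenvector:
  assumes "\<And>i. i < r \<Longrightarrow> (\<Sum>j<r. p i j * a j * v j) = \<mu> * v i"
  shows "quad_form r p (\<lambda>i. a i * v i) = \<mu> * (\<Sum>i<r. a i * (v i)\<^sup>2)"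
proof -
  have "quad_form r p (\<lambda>i. a i * v i) = (\<Sum>i<r. a i * v i * (\<Sum>j<r. p i j * a j * v j))"
    by (simp add: quad_form_def sum_distrib_left mult_ac)
  also have "\<dots> = (\<Sum>i<r. a i * v i * (\<mu> * v i))"
    by (intro sum.cong) (simp_all add: assms)
  also have "\<dots> = \<mu> * (\<Sum>i<r. a i * (v i)\<^sup>2)"
    by (simp add: sum_distrib_left power2_eq_square mult_ac)
  finally show ?thesis .
qed

lemma weighted_sum_sq_le_of_weights_le:
  fixes a c v :: "nat \<Rightarrow> real"
  assumes "\<And>i. i < r \<Longrightarrow> a i > 0" and "\<theta> > 0" and "\<And>i. i < r \<Longrightarrow> \<theta> * a i \<le> c i"
  shows "(\<Sum>i<r. (a i * v i)\<^sup>2 / c i) \<le> (\<Sum>i<r. a i * (v i)\<^sup>2) / \<theta>"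
proof -
  have "(a i * v i)\<^sup>2 / c i \<le> a i * (v i)\<^sup>2 / \<theta>" if "i < r" for i
  proof -
    have "0 < a i" "\<theta> * a i \<le> c i"
      using assms that by auto
    moreover have "0 < \<theta> * a i"
      using \<open>\<theta> > 0\<close> \<open>0 < a i\<close> by (rule mult_pos_pos)
    ultimately have "a i * (v i)\<^sup>2 * a i / c i \<le> a i * (v i)\<^sup>2 * a i / (\<theta> * a i)"
      by (intro divide_left_mono mult_nonneg_nonneg) (auto intro: less_imp_le)
    then show ?thesis
      using \<open>0 < a i\<close> by (simp add: power2_eq_square mult_ac)
  qed
  then show ?thesis
    unfolding sum_divide_distrib by (intro sum_mono) auto
qed

lemma largest_eigenvalue_col_scaled_mat_mono:
  assumes "r > 0" and sym: "\<And>i j. i < r \<Longrightarrow> j < r \<Longrightarrow> p i j = p j i"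
    and a: "\<And>i. i < r \<Longrightarrow> a i > 0" and "\<theta> > 0"
    and ac: "\<And>i. i < r \<Longrightarrow> \<theta> * a i \<le> c i"
    and \<mu>_nonneg: "largest_eigenvalue (col_scaled_mat r p a) \<ge> 0"
  shows "\<theta> * largest_eigenvalue (col_scaled_mat r p a) \<le> largest_eigenvalue (col_scaled_mat r p c)"
proof -
  define \<mu> where "\<mu> = largest_eigenvalue (col_scaled_mat r p a)"
  have c: "c i > 0" if "i < r" for i
    using ac[OF that] mult_pos_pos[OF \<open>\<theta> > 0\<close> a[OF that]] by linarith
  obtain k0 where "eigenvalue (col_scaled_mat r p a) k0"
    using rayleigh_eigenvalue_col_scaled_mat[where p = p and c = a, OF \<open>r > 0\<close> sym a] by blast
  then have "eigenvalue (col_scaled_mat r p a) \<mu>"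
    unfolding \<mu>_def by (rule eigenvalue_largest_eigenvalue[OF col_scaled_mat_carrier])
  then obtain v i0 where "i0 < r" "v i0 \<noteq> 0"
    and v: "\<And>i. i < r \<Longrightarrow> (\<Sum>j<r. p i j * a j * v j) = \<mu> * v i"
    unfolding eigenvalue_col_scaled_mat_iff by blast
  obtain k where k: "eigenvalue (col_scaled_mat r p c) k"
    and k_bound: "\<And>u. quad_form r p u \<le> k * (\<Sum>i<r. (u i)\<^sup>2 / c i)"
    using rayleigh_eigenvalue_col_scaled_mat[where p = p and c = c, OF \<open>r > 0\<close> sym c] by blast
  define W where "W = (\<Sum>i<r. a i * (v i)\<^sup>2)"
  define R where "R = (\<Sum>i<r. (a i * v i)\<^sup>2 / c i)"
  have "W > 0"
    unfolding W_def using \<open>i0 < r\<close> \<open>v i0 \<noteq> 0\<close> a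
    by (intro sum_pos2[of _ i0]) (auto simp: less_imp_le)
  have "R > 0"
    unfolding R_def using \<open>i0 < r\<close> \<open>v i0 \<noteq> 0\<close> a[OF \<open>i0 < r\<close>] c
    by (intro sum_pos2[of _ i0]) (auto simp: less_imp_le intro!: divide_pos_pos divide_nonneg_nonneg)
  have "\<mu> * W \<le> k * R"
    using k_bound[of "\<lambda>i. a i * v i"] by (simp add: quad_form_scaled_eigenvector[OF v] W_def R_def)
  moreover have "0 \<le> \<mu> * W"
    using \<mu>_nonneg \<open>W > 0\<close> by (simp add: \<mu>_def)
  ultimately have "0 \<le> k * R"
    by linarith
  with \<open>R > 0\<close> have "k \<ge> 0"
    by (simp add: zero_le_mult_iff)
  moreover have "R \<le> W / \<theta>"
    unfolding R_def W_def using a \<open>\<theta> > 0\<close> ac by (rule weighted_sum_sq_le_of_weights_le)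
  ultimately have "\<mu> * W \<le> k * (W / \<theta>)"
    using \<open>\<mu> * W \<le> k * R\<close> mult_left_mono by fastforce
  with \<open>W > 0\<close> \<open>\<theta> > 0\<close> have "\<theta> * \<mu> \<le> k"
    by (simp add: field_simps)
  also have "k \<le> largest_eigenvalue (col_scaled_mat r p c)"
    using eigenvalue_le_largest_eigenvalue[OF col_scaled_mat_carrier k] .
  finally show ?thesis unfolding \<mu>_def .
qed

lemma largest_eigenvalue_col_scaled_mat_shift:
  assumes "r > 0" and "\<And>i j. i < r \<Longrightarrow> j < r \<Longrightarrow> p i j = p j i"
    and "\<And>i. i < r \<Longrightarrow> a i > 0" and "\<epsilon> > 0"
    and t: "\<And>i. i < r \<Longrightarrow> t \<le> \<epsilon> / (2 * (1 + \<epsilon>)) * a i"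
    and M: "largest_eigenvalue (col_scaled_mat r p a) \<ge> 1 + \<epsilon>"
  shows "largest_eigenvalue (col_scaled_mat r p (\<lambda>j. a j - t)) \<ge> 1 + \<epsilon> / 2"
proof -
  define \<theta> where "\<theta> = (1 + \<epsilon> / 2) / (1 + \<epsilon>)"
  have "\<theta> = 1 - \<epsilon> / (2 * (1 + \<epsilon>))"
    using \<open>\<epsilon> > 0\<close> by (simp add: \<theta>_def field_simps)
  then have "\<theta> * a i \<le> a i - t" if "i < r" for i
    using t[OF that] by (simp add: left_diff_distrib)
  moreover have "\<theta> > 0"
    using \<open>\<epsilon> > 0\<close> by (simp add: \<theta>_def)
  ultimately have "\<theta> * largest_eigenvalue (col_scaled_mat r p a)
      \<le> largest_eigenvalue (col_scaled_mat r p (\<lambda>j. a j - t))"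
    using assms by (intro largest_eigenvalue_col_scaled_mat_mono) auto
  moreover have "1 + \<epsilon> / 2 = \<theta> * (1 + \<epsilon>)"
    using \<open>\<epsilon> > 0\<close> by (simp add: \<theta>_def)
  moreover have "\<theta> * (1 + \<epsilon>) \<le> \<theta> * largest_eigenvalue (col_scaled_mat r p a)"
    using M \<open>\<theta> > 0\<close> by simp
  ultimately show ?thesis
    by linarith
qed

lemma eventually_powr_le_linear:
  fixes \<alpha> \<delta> :: real
  assumes "\<alpha> < 1" and "\<delta> > 0"
  shows "eventually (\<lambda>n. real n powr \<alpha> \<le> \<delta> * real n) sequentially"
proof -
  have "((\<lambda>n. real n powr (\<alpha> - 1)) \<longlongrightarrow> 0) sequentially"
    using assms(1) by (intro tendsto_neg_powr filterlim_real_sequentially) simp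
  from order_tendstoD(2)[OF this \<open>\<delta> > 0\<close>] eventually_gt_at_top[of 0]
  show ?thesis
  proof eventually_elim
    case (elim n)
    then have "real n powr \<alpha> = real n powr (\<alpha> - 1) * real n"
      by (simp add: powr_diff)
    also have "\<dots> \<le> \<delta> * real n"
      using elim by (intro mult_right_mono) auto
    finally show ?case .
  qed
qed

lemma sum_le_card_mult_of_ratio_bound:
  fixes ns :: "nat \<Rightarrow> nat"
  assumes "\<forall>i<r. \<forall>j<r. ns i \<le> A * ns j" and "i < r"
  shows "(\<Sum>j<r. ns j) \<le> r * A * ns i"
  using assms sum_mono[of "{..<r}" ns "\<lambda>_. A * ns i"] by simp

lemma powr_sum_le_of_ratio_bound_eventually:
  fixes A r :: nat and \<alpha> \<gamma> :: real
  assumes "\<alpha> < 1" and "\<gamma> > 0"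
  obtains N where "\<And>ns i. \<forall>i<r. \<forall>j<r. ns i \<le> A * ns j \<Longrightarrow> N \<le> (\<Sum>j<r. ns j) \<Longrightarrow> i < r \<Longrightarrow>
    real (\<Sum>j<r. ns j) powr \<alpha> \<le> \<gamma> * real (ns i)"
proof -
  have "real (r * A) + 1 > 0"
    by linarith
  define \<delta> where "\<delta> = \<gamma> / (real (r * A) + 1)"
  have "\<delta> > 0"
    unfolding \<delta>_def using \<open>\<gamma> > 0\<close> \<open>real (r * A) + 1 > 0\<close> by (rule divide_pos_pos)
  then obtain N where N: "\<And>n. n \<ge> N \<Longrightarrow> real n powr \<alpha> \<le> \<delta> * real n"
    using eventually_powr_le_linear[OF \<open>\<alpha> < 1\<close>] unfolding eventually_sequentially by blast
  have "real (\<Sum>j<r. ns j) powr \<alpha> \<le> \<gamma> * real (ns i)"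
    if ratio: "\<forall>i<r. \<forall>j<r. ns i \<le> A * ns j" and "N \<le> (\<Sum>j<r. ns j)" and "i < r" for ns i
  proof -
    have "real (\<Sum>j<r. ns j) \<le> real (r * A) * real (ns i)"
      using sum_le_card_mult_of_ratio_bound[OF ratio \<open>i < r\<close>] by (metis of_nat_le_iff of_nat_mult)
    with \<open>\<delta> > 0\<close> have "\<delta> * real (\<Sum>j<r. ns j) \<le> \<delta> * (real (r * A) * real (ns i))"
      by (intro mult_left_mono) auto
    also have "\<dots> \<le> \<delta> * (real (r * A) + 1) * real (ns i)"
      using \<open>\<delta> > 0\<close> by (simp add: algebra_simps)
    also have "\<dots> = \<gamma> * real (ns i)"
      using \<open>real (r * A) + 1 > 0\<close> by (simp add: \<delta>_def)
    finally show ?thesis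
      using N[OF \<open>N \<le> (\<Sum>j<r. ns j)\<close>] by linarith
  qed
  then show ?thesis
    using that by blast
qed

theorem claim3p2:
  fixes A r :: nat and \<epsilon> :: real
  assumes "\<epsilon> > 0"
  shows "\<exists>N::nat. \<forall>(ns :: nat \<Rightarrow> nat) (\<Lambda> :: nat \<Rightarrow> nat \<Rightarrow> real).
     (\<forall>i<r. ns i > 0) \<longrightarrow>
     (\<forall>i<r. \<forall>j<r. ns i \<le> A * ns j) \<longrightarrow>
     (\<Sum>i<r. ns i) \<ge> N \<longrightarrow>
     (\<forall>i<r. \<forall>j<r. \<Lambda> i j = \<Lambda> j i) \<longrightarrow>
     (\<forall>i<r. \<forall>j<r. \<Lambda> i j \<ge> 0) \<longrightarrow>
     eps_separated r \<epsilon> \<Lambda> \<longrightarrow>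
     (let n = (\<Sum>i<r. ns i);
          p = (\<lambda>i j. \<Lambda> i j / sqrt (real (ns i) * real (ns j)));
          M = mat r r (\<lambda>(i, j). p i j * real (ns j));
          Q = mat r r (\<lambda>(i, j). (real (ns j) - real n powr 0.999) * p i j)
      in largest_eigenvalue M \<ge> 1 + \<epsilon> \<longrightarrow> largest_eigenvalue Q \<ge> 1 + \<epsilon> / 2)"
proof -
  obtain N where N: "\<And>ns i. \<forall>i<r. \<forall>j<r. ns i \<le> A * ns j \<Longrightarrow> N \<le> (\<Sum>j<r. ns j) \<Longrightarrow> i < r \<Longrightarrow>
      real (\<Sum>j<r. ns j) powr 0.999 \<le> \<epsilon> / (2 * (1 + \<epsilon>)) * real (ns i)"
    using powr_sum_le_of_ratio_bound_eventually[of "0.999" "\<epsilon> / (2 * (1 + \<epsilon>))" r A] assms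
    by (auto simp: add_pos_pos)
  show ?thesis
  proof (intro exI[of _ "max N 1"] allI impI, unfold Let_def, intro impI)
    fix ns :: "nat \<Rightarrow> nat" and \<Lambda> :: "nat \<Rightarrow> nat \<Rightarrow> real"
    define p where "p i j = \<Lambda> i j / sqrt (real (ns i) * real (ns j))" for i j
    assume "\<forall>i<r. ns i > 0" and "\<forall>i<r. \<forall>j<r. ns i \<le> A * ns j"
      and big: "max N 1 \<le> (\<Sum>i<r. ns i)" and "\<forall>i<r. \<forall>j<r. \<Lambda> i j = \<Lambda> j i"
      and "\<forall>i<r. \<forall>j<r. \<Lambda> i j \<ge> 0" and "eps_separated r \<epsilon> \<Lambda>"
      and "1 + \<epsilon> \<le> largest_eigenvalue
        (mat r r (\<lambda>(i, j). \<Lambda> i j / sqrt (real (ns i) * real (ns j)) * real (ns j)))"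
    moreover have "r > 0"
      using big by (intro gr0I) simp
    ultimately have "1 + \<epsilon> / 2 \<le> largest_eigenvalue
        (col_scaled_mat r p (\<lambda>j. real (ns j) - real (\<Sum>i<r. ns i) powr 0.999))"
      using assms N by (intro largest_eigenvalue_col_scaled_mat_shift)
        (auto simp: p_def col_scaled_mat_def mult.commute)
    then show "largest_eigenvalue (mat r r (\<lambda>(i, j). (real (ns j) - real (\<Sum>i<r. ns i) powr 0.999)
        * (\<Lambda> i j / sqrt (real (ns i) * real (ns j))))) \<ge> 1 + \<epsilon> / 2"
      by (simp add: col_scaled_mat_def p_def mult.commute)
  qed
qed

end
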